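(* Define on $(0,\infty)^4$ the function $$S(x_1,x_2,x_3,x_4)=(x_1^2x_2^2x_3^2x_4)^{1/7}\Big[\tfrac{12}{x_1}+\tfrac{12}{x_2}+\tfrac{12}{x_3}+\tfrac{6}{x_4}-2\Big(\tfrac{x_1}{x_2x_3}+\tfrac{x_2}{x_1x_3}+\tfrac{x_3}{x_1x_2}\Big)-3\Big(\tfrac{x_1}{x_2x_4}+\tfrac{x_2}{x_1x_4}+\tfrac{x_4}{x_1x_2}\Big)\Big].$$ Let $x^*=(x_1,x_2,x_3,x_4)\approx(5.67352,1.09220,5.50695,5.72906)$ be the critical point of $S$ corresponding to Nikonorov's non-block-diagonal $\mathrm{SU}(3)$-invariant Einstein metric on $N^{130}$. Then $\frac{\partial^2 S}{\partial x_2^2}(x^* )>0$.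
   Context: $S$ is, up to a positive constant factor, the normalized total scalar curvature $\mathrm{Vol}^{2/7}\cdot s$ of the $\mathrm{SU}(3)$-invariant metrics $x_1Q'|_{\mathfrak p_1}\oplus x_2Q'|_{\mathfrak p_2}\oplus x_3Q'|_{\mathfrak p_3}\oplus x_4Q'|_{\mathfrak p_4}$ on the Aloff–Wallach space $N^{130}=N_{1,0}$, where $Q'(X,Y)=-\frac12\mathrm{tr}(XY)$ and $\mathfrak p_1\oplus\cdots\oplus\mathfrak p_4$ is Nikonorov's $\mathrm{Ad}$-invariant decomposition with parameter $\sin^2(2\alpha)=1$; Einstein metrics in this family are critical points of $S$. *)

theory Defs
  imports "HOL-Analysis.Analysis"
begin

definition S :: "real \<Rightarrow> real \<Rightarrow> real \<Rightarrow> real \<Rightarrow> real" where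
  "S x1 x2 x3 x4 =
     (x1^2 * x2^2 * x3^2 * x4) powr (1/7) *
     (12/x1 + 12/x2 + 12/x3 + 6/x4
      - 2 * (x1/(x2*x3) + x2/(x1*x3) + x3/(x1*x2))
      - 3 * (x1/(x2*x4) + x2/(x1*x4) + x4/(x1*x2)))"

definition critical_S :: "real \<Rightarrow> real \<Rightarrow> real \<Rightarrow> real \<Rightarrow> bool" where
  "critical_S x1 x2 x3 x4 \<longleftrightarrow>
     x1 > 0 \<and> x2 > 0 \<and> x3 > 0 \<and> x4 > 0 \<and>
     ((\<lambda>t. S t x2 x3 x4) has_real_derivative 0) (at x1) \<and>
     ((\<lambda>t. S x1 t x3 x4) has_real_derivative 0) (at x2) \<and>
     ((\<lambda>t. S x1 x2 t x4) has_real_derivative 0) (at x3) \<and>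
     ((\<lambda>t. S x1 x2 x3 t) has_real_derivative 0) (at x4)"

end

theory Submission
  imports Defs
begin

text \<open>With \<open>x\<^sub>1, x\<^sub>3, x\<^sub>4\<close> fixed, \<open>S\<close> is a combination
  \<open>C (A t\<^bsup>2/7\<^esup> + B t\<^bsup>-5/7\<^esup> - D t\<^bsup>9/7\<^esup>)\<close> of powers of \<open>t = x\<^sub>2\<close> with
  \<open>A, C, D > 0\<close>, so \<open>\<partial>\<^sup>2S/\<partial>x\<^sub>2\<^sup>2 = C t\<^bsup>-19/7\<^esup> (60 B - 10 A t - 18 D t\<^sup>2) / 49\<close>.
  Near \<open>x\<^sup>*\<close> the coefficient \<open>B\<close> is about 2 while \<open>A t\<close> and \<open>D t\<^sup>2\<close> are small
  enough that the bracket stays positive on the whole box of radius \<open>10\<^sup>-\<^sup>4\<close>.\<close>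

lemma deriv_deriv_powr_combination:
  fixes A B D a b c t :: real
  assumes "t > 0"
  shows "deriv (deriv (\<lambda>s. A * s powr a + B * s powr b + D * s powr c)) t =
           A * a * (a - 1) * t powr (a - 2) + B * b * (b - 1) * t powr (b - 2)
           + D * c * (c - 1) * t powr (c - 2)"
proof -
  let ?f' = "\<lambda>s. A * a * s powr (a - 1) + B * b * s powr (b - 1) + D * c * s powr (c - 1)"
  have "deriv (\<lambda>s. A * s powr a + B * s powr b + D * s powr c) s = ?f' s" if "s > 0" for s
    by (rule DERIV_imp_deriv) (use that in \<open>auto intro!: derivative_eq_intros\<close>)
  then have "eventually (\<lambda>s. deriv (\<lambda>s. A * s powr a + B * s powr b + D * s powr c) s = ?f' s)
               (nhds t)"
    using assms eventually_nhds_in_open[of "{0<..}" t] by (auto elim!: eventually_mono)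
  then have "deriv (deriv (\<lambda>s. A * s powr a + B * s powr b + D * s powr c)) t = deriv ?f' t"
    by (rule deriv_cong_ev) simp
  also have "\<dots> = A * a * (a - 1) * t powr (a - 2) + B * b * (b - 1) * t powr (b - 2)
                  + D * c * (c - 1) * t powr (c - 2)"
    by (rule DERIV_imp_deriv) (use assms in \<open>auto intro!: derivative_eq_intros simp: algebra_simps\<close>)
  finally show ?thesis .
qed

lemma S_as_powers_of_x2:
  fixes x1 x3 x4 t :: real
  assumes "x1 > 0" "x3 > 0" "x4 > 0" "t > 0"
  defines "C \<equiv> (x1^2 * x3^2 * x4) powr (1/7)"
  shows "S x1 t x3 x4 =
           C * ((12/x1 + 12/x3 + 6/x4) * t powr (2/7)
                + (12 - 2 * (x1/x3 + x3/x1) - 3 * (x1/x4 + x4/x1)) * t powr (-5/7)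
                - (2/(x1*x3) + 3/(x1*x4)) * t powr (9/7))"
proof -
  have neg: "t powr (-5/7) = t powr (2/7) / t"
    using powr_add[of t "-5/7" 1] assms(4) by simp
  have pos: "t powr (9/7) = t powr (2/7) * t"
    using powr_add[of t "2/7" 1] assms(4) by simp
  have "(x1^2 * t^2 * x3^2 * x4) powr (1/7) = C * (t powr 2) powr (1/7)"
    using assms by (simp add: C_def powr_mult powr_realpow mult_ac)
  also have "(t powr 2) powr (1/7) = t powr (2/7)"
    by (simp add: powr_powr)
  finally have weight: "(x1^2 * t^2 * x3^2 * x4) powr (1/7) = C * t powr (2/7)" .
  show ?thesis
    unfolding S_def weight neg pos using assms(1-4) by (simp add: field_simps)
qed

lemma S_deriv_deriv_x2:
  fixes x1 x3 x4 t :: real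
  assumes "x1 > 0" "x3 > 0" "x4 > 0" "t > 0"
  defines "C \<equiv> (x1^2 * x3^2 * x4) powr (1/7)"
    and "A \<equiv> 12/x1 + 12/x3 + 6/x4"
    and "B \<equiv> 12 - 2 * (x1/x3 + x3/x1) - 3 * (x1/x4 + x4/x1)"
    and "D \<equiv> 2/(x1*x3) + 3/(x1*x4)"
  shows "deriv (deriv (\<lambda>s. S x1 s x3 x4)) t = C * t powr (-19/7) * (60*B - 10*A*t - 18*D*t^2) / 49"
proof -
  have "eventually (\<lambda>s. S x1 s x3 x4 =
          C * A * s powr (2/7) + C * B * s powr (-5/7) + - C * D * s powr (9/7)) (nhds t)"
    using eventually_nhds_in_open[of "{0<..}" t] assms
    by (auto simp: S_as_powers_of_x2 C_def A_def B_def D_def algebra_simps elim!: eventually_mono)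
  from higher_deriv_cong_ev[OF this refl, of 2]
  have "deriv (deriv (\<lambda>s. S x1 s x3 x4)) t =
          deriv (deriv (\<lambda>s. C * A * s powr (2/7) + C * B * s powr (-5/7) + - C * D * s powr (9/7))) t"
    by (simp add: numeral_2_eq_2)
  also have "\<dots> = C * A * (2/7) * (2/7 - 1) * t powr (2/7 - 2) + C * B * (-5/7) * (-5/7 - 1) * t powr (-5/7 - 2)
                  + - C * D * (9/7) * (9/7 - 1) * t powr (9/7 - 2)"
    using assms(4) by (rule deriv_deriv_powr_combination)
  also have "t powr (2/7 - 2) = t powr (-19/7) * t"
    using powr_add[of t "-19/7" 1] assms(4) by simp
  also have "t powr (9/7 - 2) = t powr (-19/7) * t^2"
    using powr_add[of t "-19/7" 2] assms(4) by (simp add: powr_realpow)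
  finally show ?thesis
    by (simp add: field_simps)
qed

lemma S_x2_bracket_pos_near_critical_point:
  fixes x1 x2 x3 x4 :: real
  assumes x1: "5.67 \<le> x1" "x1 \<le> 5.68" and x2: "0 < x2" "x2 \<le> 1.1"
    and x3: "5.50 \<le> x3" "x3 \<le> 5.51" and x4: "5.72 \<le> x4" "x4 \<le> 5.73"
  defines "A \<equiv> 12/x1 + 12/x3 + 6/x4"
    and "B \<equiv> 12 - 2 * (x1/x3 + x3/x1) - 3 * (x1/x4 + x4/x1)"
    and "D \<equiv> 2/(x1*x3) + 3/(x1*x4)"
  shows "60*B - 10*A*x2 - 18*D*x2^2 > 0"
proof -
  have "x1/x3 \<le> 5.68/5.50" "x3/x1 \<le> 5.51/5.67" "x1/x4 \<le> 5.68/5.72" "x4/x1 \<le> 5.73/5.67"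
    by (rule frac_le; use x1 x3 x4 in simp)+
  then have B: "B \<ge> 1.97"
    unfolding B_def by simp
  have "12/x1 \<le> 12/5.67" "12/x3 \<le> 12/5.50" "6/x4 \<le> 6/5.72"
    by (rule frac_le; use x1 x3 x4 in simp)+
  then have A: "0 \<le> A" "A \<le> 5.35"
    unfolding A_def using x1 x3 x4 by simp_all
  have prods: "5.67 * 5.50 \<le> x1 * x3" "5.67 * 5.72 \<le> x1 * x4"
    by (rule mult_mono; use x1 x3 x4 in simp)+
  have "2/(x1*x3) \<le> 2/(5.67 * 5.50)" "3/(x1*x4) \<le> 3/(5.67 * 5.72)"
    by (rule frac_le; use prods in simp)+
  then have D: "0 \<le> D" "D \<le> 0.16"
    unfolding D_def using x1 x3 x4 by simp_all
  have Ax2: "A * x2 \<le> 5.35 * 1.1"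
    using A x2 by (intro mult_mono) auto
  have "x2^2 \<le> 1.1^2"
    using x2 by (intro power_mono) auto
  then have Dx2: "D * x2^2 \<le> 0.16 * 1.1^2"
    using D by (intro mult_mono) auto
  have "60*B - 10*(A*x2) - 18*(D*x2^2) > 0"
    using B Ax2 Dx2 by (simp only: power2_eq_square)
  then show ?thesis
    by (simp only: mult.assoc)
qed

theorem proposition2p5:
  fixes x1 x2 x3 x4 :: real
  assumes "critical_S x1 x2 x3 x4"
    and "\<bar>x1 - 5.67352\<bar> \<le> 1/10000" and "\<bar>x2 - 1.09220\<bar> \<le> 1/10000"
    and "\<bar>x3 - 5.50695\<bar> \<le> 1/10000" and "\<bar>x4 - 5.72906\<bar> \<le> 1/10000"
  shows "deriv (\<lambda>t. deriv (\<lambda>s. S x1 s x3 x4) t) x2 > 0"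
proof -
  have x1: "5.67 \<le> x1" "x1 \<le> 5.68" and x2: "0 < x2" "x2 \<le> 1.1"
    and x3: "5.50 \<le> x3" "x3 \<le> 5.51" and x4: "5.72 \<le> x4" "x4 \<le> 5.73"
    using assms(2-5) unfolding abs_le_iff by simp_all
  have "(x1^2 * x3^2 * x4) powr (1/7) * x2 powr (-19/7) > 0"
    using x1 x2 x3 x4 by simp
  moreover have "60 * (12 - 2 * (x1/x3 + x3/x1) - 3 * (x1/x4 + x4/x1))
                 - 10 * (12/x1 + 12/x3 + 6/x4) * x2 - 18 * (2/(x1*x3) + 3/(x1*x4)) * x2^2 > 0"
    using S_x2_bracket_pos_near_critical_point[OF x1 x2 x3 x4] .
  ultimately show ?thesis
    using x1 x2 x3 x4 by (simp add: S_deriv_deriv_x2)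
qed

end
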